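(* Let $n\geq 4$ and $m=\lfloor (n-2)/2\rfloor$. Then \[R_n(z)=(1+z)^m\sum_{q} z^{\mathrm{run}(q)},\] where the sum is over all permutations $q$ of length $n$ that are minimal in their orbit under the action of $G_m$. In particular, $R_n(z)$ is divisible by $(1+z)^m$.
   Context: For a permutation $p=p_1p_2\cdots p_n$ and an index $i\in[2,n-1]$, $p$ changes direction at $i$ if $p_{i-1}<p_i>p_{i+1}$ or $p_{i-1}>p_i<p_{i+1}$; $\mathrm{run}(p)=k$ means $p$ changes direction exactly $k-1$ times (the number of alternating runs). $R_n(z)=\sum_p z^{\mathrm{run}(p)}$, summed over all permutations $p$ of length $n$. For a string $s$ of distinct integers with underlying set $S$, its complement relative to $S$ is obtained by replacing, for each $j$, the $j$th smallest element of $S$ by the $j$th largest element of $S$. For $1\leq i\leq n$, $c_i$ is the map on permutations of length $n$ that leaves $p_1\cdots p_{i-1}$ unchanged and replaces $p_ip_{i+1}\cdots p_n$ by its complement relative to $\{p_i,\dots,p_n\}$. If $n$ is even, $\mathcal C_n=\{c_3,c_5,\dots,c_{n-1}\}$; if $n$ is odd, $\mathcal C_n=\{c_3,c_5,\dots,c_{n-2}\}$; $G_m\cong(\mathbb Z_2)^m$ is the group generated by $\mathcal C_n$ (these are pairwise commuting involutions), acting on permutations of length $n$. A permutation $q$ is minimal in its orbit if it has the smallest number of alternating runs among all permutations in its $G_m$-orbit (there is exactly one such permutation in each orbit). *)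

theory Defs
  imports "HOL-Combinatorics.Multiset_Permutations" "HOL-Computational_Algebra.Polynomial"
begin

text \<open>Positions are 0-based in lists: the paper's
  index i (1-based, 2 <= i <= n-1) corresponds to list position i-1.\<close>

definition changes_dir :: "nat list \<Rightarrow> nat \<Rightarrow> bool" where
  "changes_dir p i \<longleftrightarrow>
     (p ! (i - 1) < p ! i \<and> p ! i > p ! (i + 1)) \<or>
     (p ! (i - 1) > p ! i \<and> p ! i < p ! (i + 1))"

definition run :: "nat list \<Rightarrow> nat" where
  "run p = Suc (card {i. 1 \<le> i \<and> i + 1 < length p \<and> changes_dir p i})"

definition R :: "nat \<Rightarrow> int poly" where
  "R n = (\<Sum>p\<in>permutations_of_set {1..n}. monom 1 (run p))"

text \<open>Complement of a string of distinct integers relative to its underlying set: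
  the j-th smallest element (rank = number of smaller elements) is replaced by
  the j-th largest element of the sorted list.\<close>
definition complement :: "nat list \<Rightarrow> nat list" where
  "complement s = (let ss = sort s in
     map (\<lambda>x. ss ! (length s - 1 - card {y\<in>set s. y < x})) s)"

definition c :: "nat \<Rightarrow> nat list \<Rightarrow> nat list" where
  "c i p = take (i - 1) p @ complement (drop (i - 1) p)"

definition Cidx :: "nat \<Rightarrow> nat set" where
  "Cidx n = {i. odd i \<and> 3 \<le> i \<and> i \<le> (if even n then n - 1 else n - 2)}"

text \<open>Orbit of p under the group generated by C_n (generators are involutions,
  so the orbit is the closure under the generators).\<close>
inductive_set orbit :: "nat \<Rightarrow> nat list \<Rightarrow> nat list set" for n p where
  self: "p \<in> orbit n p"
| step: "q \<in> orbit n p \<Longrightarrow> i \<in> Cidx n \<Longrightarrow> c i q \<in> orbit n p"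

definition minimal_in_orbit :: "nat \<Rightarrow> nat list \<Rightarrow> bool" where
  "minimal_in_orbit n q \<longleftrightarrow> (\<forall>q'\<in>orbit n q. run q \<le> run q')"

end

theory Submission
  imports Defs
begin

text \<open>Record a permutation by its up/down word \<open>asc p\<close>, so that \<open>run p\<close> counts the letter
  changes of that word. Complementing the suffix starting at the 0-based position \<open>k = i - 1\<close>
  negates the word from position \<open>k\<close> on and replaces its letter at \<open>k - 1\<close>; only the turns
  at \<open>k - 1\<close> and \<open>k\<close> can change, and as the number of turns among three consecutive letters
  has the parity of [first letter \<noteq> last letter], \<open>run\<close> changes by exactly one.
  Whether \<open>c\<^sub>j\<close> lowers \<open>run\<close> is decided by positions \<open>j - 3 .. j\<close> of \<open>p\<close> and \<open>c\<^sub>j p\<close>,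
  which \<open>c\<^sub>i\<close> with \<open>i > j\<close> leaves alone; since \<open>c\<^sub>i\<close> and \<open>c\<^sub>j\<close> commute and every step changes
  \<open>run\<close> by one, the same holds for \<open>i < j\<close>. So \<open>c\<^sub>i\<close> toggles exactly \<open>i\<close> in the set of
  lowering generators: \<open>run\<close> minus the number of lowering generators is constant on orbits,
  the minimal permutations are those without lowering generators, and pairing \<open>p\<close> with \<open>c\<^sub>i p\<close>,
  one generator at a time, produces a factor \<open>1 + z\<close> each.\<close>

section \<open>Ranks and reflections in a finite linear order\<close>

definition rank_in :: "'a::linorder set \<Rightarrow> 'a \<Rightarrow> nat" where
  "rank_in S x = card {y\<in>S. y < x}"

definition reflect_in :: "'a::linorder set \<Rightarrow> 'a \<Rightarrow> 'a" where
  "reflect_in S x = sorted_list_of_set S ! (card S - 1 - rank_in S x)"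

lemma rank_in_less_card:
  assumes "finite S" "x \<in> S"
  shows "rank_in S x < card S"
  unfolding rank_in_def using assms by (intro psubset_card_mono) auto

lemma rank_in_strict_mono:
  assumes "finite S" "x \<in> S" "x < y"
  shows "rank_in S x < rank_in S y"
  unfolding rank_in_def using assms by (intro psubset_card_mono) auto

lemma rank_in_sorted_list_of_set_nth:
  assumes "finite S" "k < card S"
  shows "rank_in S (sorted_list_of_set S ! k) = k"
proof -
  let ?xs = "sorted_list_of_set S"
  have strict: "?xs ! i < ?xs ! j \<longleftrightarrow> i < j" if "i < card S" "j < card S" for i j
    using that sorted_wrt_nth_less[OF strict_sorted_list_of_set, of _ _ S]
    by (metis length_sorted_list_of_set linorder_neqE_nat order_less_asym)
  have mem: "?xs ! i \<in> S" if "i < card S" for i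
    using that assms(1) by (metis length_sorted_list_of_set nth_mem set_sorted_list_of_set)
  have "{y\<in>S. y < ?xs ! k} = (!) ?xs ` {..<k}"
  proof (intro set_eqI iffI)
    fix y assume "y \<in> {y\<in>S. y < ?xs ! k}"
    moreover from this obtain i where "i < card S" "y = ?xs ! i"
      using assms(1) by (metis in_set_conv_nth length_sorted_list_of_set mem_Collect_eq
          set_sorted_list_of_set)
    ultimately show "y \<in> (!) ?xs ` {..<k}"
      using strict assms(2) by auto
  next
    fix y assume "y \<in> (!) ?xs ` {..<k}"
    then show "y \<in> {y\<in>S. y < ?xs ! k}"
      using strict mem assms(2) by auto
  qed
  moreover have "inj_on ((!) ?xs) {..<k}"
    using assms by (intro inj_onI) (simp add: nth_eq_iff_index_eq)
  ultimately show ?thesis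
    unfolding rank_in_def by (simp add: card_image)
qed

lemma sorted_list_of_set_nth_rank_in:
  assumes "finite S" "x \<in> S"
  shows "sorted_list_of_set S ! rank_in S x = x"
proof -
  obtain k where "k < card S" "x = sorted_list_of_set S ! k"
    using assms by (metis in_set_conv_nth length_sorted_list_of_set set_sorted_list_of_set)
  then show ?thesis
    using rank_in_sorted_list_of_set_nth[OF assms(1)] by simp
qed

lemma inj_on_rank_in: "finite S \<Longrightarrow> inj_on (rank_in S) S"
  by (metis inj_on_inverseI sorted_list_of_set_nth_rank_in)

lemma reflect_in_mem:
  assumes "finite S" "x \<in> S"
  shows "reflect_in S x \<in> S"
proof -
  have "card S - 1 - rank_in S x < length (sorted_list_of_set S)"
    using rank_in_less_card[OF assms] by simp
  then show ?thesis
    unfolding reflect_in_def using assms(1) by (metis nth_mem set_sorted_list_of_set)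
qed

lemma rank_in_reflect_in:
  assumes "finite S" "x \<in> S"
  shows "rank_in S (reflect_in S x) = card S - 1 - rank_in S x"
  unfolding reflect_in_def using rank_in_less_card[OF assms]
  by (intro rank_in_sorted_list_of_set_nth[OF assms(1)]) simp

lemma reflect_in_reflect_in:
  assumes "finite S" "x \<in> S"
  shows "reflect_in S (reflect_in S x) = x"
proof -
  have "card S - 1 - rank_in S (reflect_in S x) = rank_in S x"
    using rank_in_reflect_in[OF assms] rank_in_less_card[OF assms] by simp
  then show ?thesis
    unfolding reflect_in_def[of S "reflect_in S x"] using sorted_list_of_set_nth_rank_in[OF assms]
    by simp
qed

lemma reflect_in_less_iff:
  assumes "finite S" "x \<in> S" "y \<in> S"
  shows "reflect_in S x < reflect_in S y \<longleftrightarrow> y < x"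
proof -
  have "reflect_in S x < reflect_in S y" if "y < x" "x \<in> S" "y \<in> S" for x y
  proof -
    have "card S - 1 - rank_in S x < card S - 1 - rank_in S y"
      using rank_in_strict_mono[OF assms(1) \<open>y \<in> S\<close> \<open>y < x\<close>]
        rank_in_less_card[OF assms(1) \<open>x \<in> S\<close>] by linarith
    then show ?thesis
      unfolding reflect_in_def using assms(1) rank_in_less_card[OF assms(1) \<open>y \<in> S\<close>]
      by (intro sorted_wrt_nth_less[OF strict_sorted_list_of_set]) auto
  qed
  then show ?thesis
    using assms by (metis linorder_neqE order_less_asym)
qed

lemma bij_betw_reflect_in: "finite S \<Longrightarrow> bij_betw (reflect_in S) S S"
  by (intro bij_betw_byWitness[where f' = "reflect_in S"])
     (auto simp: reflect_in_reflect_in reflect_in_mem)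

lemma strict_antimono_on_reflect_in: "finite S \<Longrightarrow> strict_antimono_on S (reflect_in S)"
  by (intro monotone_onI) (simp add: reflect_in_less_iff)

lemma rank_in_image_strict_antimono:
  assumes "finite T" "w \<in> T" "strict_antimono_on T f"
  shows "rank_in (f ` T) (f w) = card T - 1 - rank_in T w"
proof -
  have less_iff: "f x < f y \<longleftrightarrow> y < x" if "x \<in> T" "y \<in> T" for x y
    using monotone_onD[OF assms(3)] that by (metis linorder_neqE order_less_asym)
  have "inj_on f T"
    using assms(3) strict_antimono_iff_antimono by blast
  have "{v\<in>f ` T. v < f w} = f ` {t\<in>T. w < t}"
    using less_iff assms(2) by auto
  then have "rank_in (f ` T) (f w) = card {t\<in>T. w < t}"
    unfolding rank_in_def using \<open>inj_on f T\<close> by (simp add: card_image inj_on_subset)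
  also have "{t\<in>T. w < t} = (T - {w}) - {t\<in>T. t < w}"
    by auto
  also have "card \<dots> = card T - 1 - rank_in T w"
    unfolding rank_in_def using assms(1,2) by (subst card_Diff_subset) auto
  finally show ?thesis .
qed

lemma reflect_in_image_strict_antimono:
  assumes "finite T" "y \<in> T" "strict_antimono_on T f"
  shows "reflect_in (f ` T) (f y) = f (reflect_in T y)"
proof -
  have "card (f ` T) = card T"
    using assms(3) strict_antimono_iff_antimono card_image by blast
  have "rank_in (f ` T) (reflect_in (f ` T) (f y)) = rank_in T y"
    using rank_in_reflect_in[of "f ` T" "f y"] rank_in_image_strict_antimono[OF assms]
      rank_in_less_card[OF assms(1,2)] assms(1,2) \<open>card (f ` T) = card T\<close> by simp
  moreover have "rank_in (f ` T) (f (reflect_in T y)) = rank_in T y"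
    using rank_in_image_strict_antimono[OF assms(1) reflect_in_mem[OF assms(1,2)] assms(3)]
      rank_in_reflect_in[OF assms(1,2)] rank_in_less_card[OF assms(1,2)] by simp
  ultimately show ?thesis
    using inj_on_rank_in[of "f ` T"] reflect_in_mem[of "f ` T" "f y"] reflect_in_mem[OF assms(1,2)]
      assms(1,2) by (metis finite_imageI imageI inj_on_eq_iff)
qed

section \<open>The suffix complements\<close>

lemma nth_mem_set_drop_iff:
  assumes "distinct p" "t < length p"
  shows "p ! t \<in> set (drop k p) \<longleftrightarrow> k \<le> t"
proof
  assume "k \<le> t"
  then show "p ! t \<in> set (drop k p)"
    using assms(2) by (auto simp: in_set_conv_nth intro!: exI[of _ "t - k"])
next
  assume "p ! t \<in> set (drop k p)"
  moreover have "p ! t \<in> set (take k p)" if "t < k"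
    using that assms(2) by (auto simp: in_set_conv_nth intro!: exI[of _ t])
  ultimately show "k \<le> t"
    using set_take_disj_set_drop_if_distinct[OF assms(1) order_refl] by (meson disjoint_iff not_le)
qed

lemma complement_eq_map_reflect_in:
  assumes "distinct s"
  shows "complement s = map (reflect_in (set s)) s"
proof -
  have "sort s = sorted_list_of_set (set s)" "length s = card (set s)"
    using assms by (simp_all add: sorted_list_of_set_sort_remdups distinct_remdups_id distinct_card)
  then show ?thesis
    unfolding complement_def reflect_in_def rank_in_def Let_def by simp
qed

lemma c_eq_map_reflect_in:
  "distinct p \<Longrightarrow>
    c i p = take (i - 1) p @ map (reflect_in (set (drop (i - 1) p))) (drop (i - 1) p)"
  unfolding c_def by (simp add: complement_eq_map_reflect_in)

lemma length_c [simp]: "length (c i p) = length p"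
  by (simp add: c_def complement_def Let_def)

lemma nth_c:
  assumes "distinct p" "t < length p"
  shows "c i p ! t = (if t < i - 1 then p ! t else reflect_in (set (drop (i - 1) p)) (p ! t))"
  using assms by (simp add: c_eq_map_reflect_in nth_append)

lemma distinct_c: "distinct p \<Longrightarrow> distinct (c i p)"
  and set_c: "distinct p \<Longrightarrow> set (c i p) = set p"
proof -
  assume "distinct p"
  let ?S = "set (drop (i - 1) p)"
  have "bij_betw (reflect_in ?S) ?S ?S"
    by (simp add: bij_betw_reflect_in)
  then have "distinct (map (reflect_in ?S) (drop (i - 1) p))" "reflect_in ?S ` ?S = ?S"
    using \<open>distinct p\<close> by (simp_all add: distinct_map bij_betw_def)
  moreover have "set (take (i - 1) p) \<inter> ?S = {}"
    using \<open>distinct p\<close> by (simp add: set_take_disj_set_drop_if_distinct)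
  ultimately show "distinct (c i p)" "set (c i p) = set p"
    using \<open>distinct p\<close>
    by (simp_all add: c_eq_map_reflect_in, metis set_append append_take_drop_id)
qed

lemma c_in_permutations_of_set:
  "p \<in> permutations_of_set A \<Longrightarrow> c i p \<in> permutations_of_set A"
  by (simp add: permutations_of_set_def distinct_c set_c)

lemma drop_c:
  assumes "distinct p" "j \<le> i"
  shows "drop (i - 1) (c j p) = map (reflect_in (set (drop (j - 1) p))) (drop (i - 1) p)"
proof (cases "j - 1 \<le> length p")
  case True
  have "i - 1 - (j - 1) + (j - 1) = i - 1"
    using assms(2) by simp
  then show ?thesis
    using True assms(1) by (simp add: c_eq_map_reflect_in drop_map)
qed (use assms in \<open>simp add: c_eq_map_reflect_in\<close>)

lemma take_c:
  assumes "distinct p" "j \<le> i"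
  shows "take (j - 1) (c i p) = take (j - 1) p"
  using assms by (auto simp: c_eq_map_reflect_in min_def)

lemma set_drop_eq_Diff_set_take:
  assumes "distinct q"
  shows "set (drop k q) = set q - set (take k q)"
proof -
  have "set q = set (take k q) \<union> set (drop k q)"
    by (metis append_take_drop_id set_append)
  then show ?thesis
    using set_take_disj_set_drop_if_distinct[OF assms order_refl, of k] by blast
qed

lemma set_drop_c:
  assumes "distinct p" "j \<le> i"
  shows "set (drop (j - 1) (c i p)) = set (drop (j - 1) p)"
  using assms take_c set_c distinct_c set_drop_eq_Diff_set_take by metis

lemma c_c:
  assumes "distinct p"
  shows "c i (c i p) = p"
proof (rule nth_equalityI)
  fix t assume "t < length (c i (c i p))"
  then have t: "t < length p" by simp
  let ?S = "set (drop (i - 1) p)"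
  have "set (drop (i - 1) (c i p)) = reflect_in ?S ` ?S"
    using drop_c[OF assms order_refl] by simp
  also have "\<dots> = ?S"
    using bij_betw_reflect_in[of ?S] by (simp add: bij_betw_def)
  finally show "c i (c i p) ! t = p ! t"
    using t assms distinct_c[OF assms]
    by (simp add: nth_c reflect_in_reflect_in reflect_in_mem nth_mem_set_drop_iff)
qed simp

lemma nth_c_c_below:
  assumes "distinct p" "j \<le> i" "t < i - 1" "t < length p"
  shows "c j (c i p) ! t = c j p ! t"
  using assms set_drop_c[OF assms(1,2)] by (simp add: nth_c distinct_c)

lemma c_commute_le:
  assumes "distinct p" "j \<le> i"
  shows "c i (c j p) = c j (c i p)"
proof (rule nth_equalityI)
  fix t assume "t < length (c i (c j p))"
  then have t: "t < length p" by simp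
  show "c i (c j p) ! t = c j (c i p) ! t"
  proof (cases "t < i - 1")
    case True
    then show ?thesis
      using assms t nth_c_c_below[OF assms True t] by (simp add: nth_c distinct_c)
  next
    case False
    let ?S = "set (drop (i - 1) p)" and ?T = "set (drop (j - 1) p)"
    have "?S \<subseteq> ?T"
      using assms(2) by (simp add: set_drop_subset_set_drop)
    have "\<not> t < j - 1"
      using False assms(2) by simp
    have "p ! t \<in> ?S"
      using False t assms(1) by (simp add: nth_mem_set_drop_iff)
    have "c i (c j p) ! t = reflect_in (reflect_in ?T ` ?S) (reflect_in ?T (p ! t))"
      using False \<open>\<not> t < j - 1\<close> t assms drop_c[OF assms] by (simp add: nth_c distinct_c)
    also have "\<dots> = reflect_in ?T (reflect_in ?S (p ! t))"
      using \<open>p ! t \<in> ?S\<close> \<open>?S \<subseteq> ?T\<close> strict_antimono_on_reflect_in[of ?T]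
      by (intro reflect_in_image_strict_antimono) (auto intro: monotone_on_subset)
    also have "\<dots> = c j (c i p) ! t"
      using False \<open>\<not> t < j - 1\<close> t assms set_drop_c[OF assms] by (simp add: nth_c distinct_c)
    finally show ?thesis .
  qed
qed simp

lemma c_commute: "distinct p \<Longrightarrow> c i (c j p) = c j (c i p)"
  by (metis c_commute_le nat_le_linear)

section \<open>Runs and the effect of a single complement\<close>

definition asc :: "nat list \<Rightarrow> nat \<Rightarrow> bool" where
  "asc p t \<longleftrightarrow> p ! t < p ! Suc t"

definition turns :: "nat \<Rightarrow> (nat \<Rightarrow> bool) \<Rightarrow> nat set" where
  "turns n u = {t. 1 \<le> t \<and> t + 1 < n \<and> u (t - 1) \<noteq> u t}"

definition turns3 :: "bool \<Rightarrow> bool \<Rightarrow> bool \<Rightarrow> nat" where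
  "turns3 a b e = of_bool (a \<noteq> b) + of_bool (b \<noteq> e)"

lemma finite_turns [simp]: "finite (turns n u)"
  by (rule finite_subset[of _ "{..<n}"]) (auto simp: turns_def)

lemma run_eq_Suc_card_turns:
  assumes "distinct p"
  shows "run p = Suc (card (turns (length p) (asc p)))"
proof -
  have "changes_dir p t \<longleftrightarrow> asc p (t - 1) \<noteq> asc p t" if "1 \<le> t" "t + 1 < length p" for t
  proof -
    have "p ! (t - 1) \<noteq> p ! t" "p ! t \<noteq> p ! (t + 1)"
      using that assms by (simp_all add: nth_eq_iff_index_eq)
    moreover have "Suc (t - 1) = t"
      using that by simp
    ultimately show ?thesis
      unfolding changes_dir_def asc_def by (metis Suc_eq_plus1 linorder_neqE_nat order.asym)
  qed
  then have "{t. 1 \<le> t \<and> t + 1 < length p \<and> changes_dir p t} = turns (length p) (asc p)"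
    unfolding turns_def by blast
  then show ?thesis
    unfolding run_def by simp
qed

lemma card_turns_Int_window:
  assumes "2 \<le> k" "k + 2 \<le> n"
  shows "card (turns n u \<inter> {k - 1, k}) = turns3 (u (k - 2)) (u (k - 1)) (u k)"
proof -
  have "turns n u \<inter> {k - 1, k} =
      (if u (k - 2) \<noteq> u (k - 1) then {k - 1} else {}) \<union> (if u (k - 1) \<noteq> u k then {k} else {})"
    using assms by (auto simp: turns_def numeral_2_eq_2 Suc_diff_Suc)
  moreover have "k - 1 \<noteq> k"
    using assms(1) by simp
  ultimately show ?thesis
    by (simp add: turns3_def)
qed

lemma card_turns_flip_tail:
  assumes "2 \<le> k" "k + 2 \<le> n"
    and below: "\<And>t. t + 1 < k \<Longrightarrow> v t = u t"
    and above: "\<And>t. k \<le> t \<Longrightarrow> t + 2 \<le> n \<Longrightarrow> v t = (\<not> u t)"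
  shows "card (turns n v) + turns3 (u (k - 2)) (u (k - 1)) (u k)
       = card (turns n u) + turns3 (u (k - 2)) (v (k - 1)) (\<not> u k)"
proof -
  have "turns n v - {k - 1, k} = turns n u - {k - 1, k}"
  proof -
    have "v (t - 1) \<noteq> v t \<longleftrightarrow> u (t - 1) \<noteq> u t"
      if "1 \<le> t" "t + 1 < n" "t \<noteq> k - 1" "t \<noteq> k" for t
    proof (cases "t < k")
      case True
      then show ?thesis using that below[of t] below[of "t - 1"] by simp
    next
      case False
      then show ?thesis using that above[of t] above[of "t - 1"] by simp
    qed
    then show ?thesis
      unfolding turns_def by auto
  qed
  moreover have "v (k - 2) = u (k - 2)" "v k = (\<not> u k)"
    using assms by simp_all
  ultimately show ?thesis
    using card_Int_Diff[of "turns n v" "{k - 1, k}"] card_Int_Diff[of "turns n u" "{k - 1, k}"]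
      card_turns_Int_window[OF assms(1,2)] by simp
qed

lemma asc_c_below:
  assumes "distinct p" "t + 1 < i - 1" "t + 1 < length p"
  shows "asc (c i p) t = asc p t"
  using assms by (simp add: asc_def nth_c)

lemma asc_c_above:
  assumes "distinct p" "i - 1 \<le> t" "t + 1 < length p"
  shows "asc (c i p) t \<longleftrightarrow> \<not> asc p t"
proof -
  let ?S = "set (drop (i - 1) p)"
  have "p ! t \<in> ?S" "p ! Suc t \<in> ?S"
    using assms by (simp_all add: nth_mem_set_drop_iff)
  moreover have "p ! t \<noteq> p ! Suc t"
    using assms by (simp add: nth_eq_iff_index_eq)
  ultimately show ?thesis
    using assms by (auto simp: asc_def nth_c reflect_in_less_iff)
qed

lemma run_c_turns3:
  assumes "distinct p" "3 \<le> i" "i < length p"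
  shows "run (c i p) + turns3 (asc p (i - 3)) (asc p (i - 2)) (asc p (i - 1))
       = run p + turns3 (asc p (i - 3)) (asc (c i p) (i - 2)) (\<not> asc p (i - 1))"
proof -
  have "card (turns (length p) (asc (c i p)))
        + turns3 (asc p (i - 1 - 2)) (asc p (i - 1 - 1)) (asc p (i - 1))
      = card (turns (length p) (asc p))
        + turns3 (asc p (i - 1 - 2)) (asc (c i p) (i - 1 - 1)) (\<not> asc p (i - 1))"
    using assms by (intro card_turns_flip_tail) (simp_all add: asc_c_below asc_c_above)
  moreover have "i - 1 - 2 = i - 3" "i - 1 - 1 = i - 2"
    by simp_all
  ultimately show ?thesis
    using assms distinct_c[OF assms(1)] by (simp add: run_eq_Suc_card_turns)
qed

lemma turns3_negate_last:
  "turns3 a b' (\<not> e) = Suc (turns3 a b e) \<or> Suc (turns3 a b' (\<not> e)) = turns3 a b e"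
  by (cases a; cases b; cases b'; cases e) (simp_all add: turns3_def)

lemma run_c_Suc_cases:
  assumes "distinct p" "3 \<le> i" "i < length p"
  shows "run (c i p) = Suc (run p) \<or> Suc (run (c i p)) = run p"
  using run_c_turns3[OF assms]
    turns3_negate_last[of "asc p (i - 3)" "asc (c i p) (i - 2)" "asc p (i - 1)" "asc p (i - 2)"]
  by auto

section \<open>Generators lowering the number of runs\<close>

definition lowers :: "nat \<Rightarrow> nat list \<Rightarrow> bool" where
  "lowers i p \<longleftrightarrow> run (c i p) < run p"

lemma run_pos: "0 < run p"
  by (simp add: run_def)

lemma run_c_eq_if_lowers:
  assumes "distinct p" "3 \<le> i" "i < length p"
  shows "run (c i p) = (if lowers i p then run p - 1 else Suc (run p))"
  using run_c_Suc_cases[OF assms] unfolding lowers_def by auto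

lemma lowers_c_self:
  assumes "distinct p" "3 \<le> i" "i < length p"
  shows "lowers i (c i p) \<longleftrightarrow> \<not> lowers i p"
  using run_c_Suc_cases[OF assms] c_c[OF assms(1)] unfolding lowers_def by auto

lemma lowers_iff_turns3:
  assumes "distinct p" "3 \<le> i" "i < length p"
  shows "lowers i p \<longleftrightarrow>
    turns3 (asc p (i - 3)) (asc (c i p) (i - 2)) (\<not> asc p (i - 1))
      < turns3 (asc p (i - 3)) (asc p (i - 2)) (asc p (i - 1))"
  using run_c_turns3[OF assms] unfolding lowers_def by linarith

lemma lowers_c_right:
  assumes "distinct p" "3 \<le> j" "j + 2 \<le> i" "i < length p"
  shows "lowers j (c i p) \<longleftrightarrow> lowers j p"
proof -
  have "asc (c i p) t = asc p t" if "t \<le> j - 1" for t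
    using assms that by (intro asc_c_below) simp_all
  moreover have "asc (c j (c i p)) (j - 2) = asc (c j p) (j - 2)"
  proof -
    have "Suc (j - 2) = j - 1"
      using assms(2) by simp
    then show ?thesis
      using assms nth_c_c_below[OF assms(1), of j i "j - 2"]
        nth_c_c_below[OF assms(1), of j i "j - 1"]
      unfolding asc_def by simp
  qed
  ultimately show ?thesis
    using assms distinct_c[OF assms(1)]
    by (simp add: lowers_iff_turns3)
qed

lemma lowers_c_left:
  assumes "distinct p" "3 \<le> i" "i + 2 \<le> j" "j < length p"
  shows "lowers j (c i p) \<longleftrightarrow> lowers j p"
proof -
  have "lowers i (c j p) \<longleftrightarrow> lowers i p"
    using assms by (intro lowers_c_right) simp_all
  moreover have "run (c i (c j p)) = run (c j (c i p))"
    using c_commute[OF assms(1)] by simp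
  moreover have "i < length p" "3 \<le> j"
    using assms by simp_all
  ultimately show ?thesis
    using run_c_Suc_cases[OF assms(1,2) \<open>i < length p\<close>]
      run_c_Suc_cases[OF assms(1) \<open>3 \<le> j\<close> assms(4)]
      run_c_Suc_cases[OF distinct_c[OF assms(1)] \<open>3 \<le> j\<close>, of i]
      run_c_Suc_cases[OF distinct_c[OF assms(1)] assms(2), of j] assms(4) \<open>i < length p\<close>
    unfolding lowers_def by simp linarith
qed

lemma CidxD:
  assumes "i \<in> Cidx n"
  shows "odd i" "3 \<le> i" "i < n"
  using assms unfolding Cidx_def by (auto split: if_splits)

lemma lowers_c_other:
  assumes "distinct p" "length p = n" "i \<in> Cidx n" "j \<in> Cidx n" "i \<noteq> j"
  shows "lowers j (c i p) \<longleftrightarrow> lowers j p"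
proof -
  have "i + 2 \<le> j \<or> j + 2 \<le> i"
    using CidxD(1)[OF assms(3)] CidxD(1)[OF assms(4)] assms(5) by (auto elim!: oddE)
  then show ?thesis
    using assms lowers_c_left lowers_c_right CidxD by metis
qed

definition lowering_gens :: "nat \<Rightarrow> nat list \<Rightarrow> nat set" where
  "lowering_gens n p = {i \<in> Cidx n. lowers i p}"

lemma finite_Cidx: "finite (Cidx n)"
  by (rule finite_subset[of _ "{..n}"]) (auto simp: Cidx_def)

lemma lowering_gens_subset_Cidx: "lowering_gens n p \<subseteq> Cidx n"
  by (auto simp: lowering_gens_def)

lemma finite_lowering_gens [simp]: "finite (lowering_gens n p)"
  using lowering_gens_subset_Cidx finite_Cidx by (rule finite_subset)

lemma lowering_gens_c:
  assumes "distinct p" "length p = n" "i \<in> Cidx n"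
  shows "lowering_gens n (c i p) =
    (if i \<in> lowering_gens n p then lowering_gens n p - {i} else insert i (lowering_gens n p))"
  using assms lowers_c_self[OF assms(1) CidxD(2)[OF assms(3)] CidxD(3)[OF assms(3), folded assms(2)]]
    lowers_c_other[OF assms(1,2,3)]
  unfolding lowering_gens_def by auto

lemma R_eq_sum_avoiding_lowering_gens:
  assumes "finite T" "T \<subseteq> Cidx n"
  shows "R n = [:1, 1:] ^ card T *
    (\<Sum>p\<in>{p\<in>permutations_of_set {1..n}. lowering_gens n p \<inter> T = {}}. monom 1 (run p))"
  using assms
proof (induction T rule: finite_induct)
  case empty
  then show ?case
    unfolding R_def by simp
next
  case (insert i T)
  have i: "i \<in> Cidx n" and "T \<subseteq> Cidx n"
    using insert.prems by auto
  let ?f = "\<lambda>p. monom (1::int) (run p)"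
  let ?Z = "{p\<in>permutations_of_set {1..n}. lowering_gens n p \<inter> T = {}}"
  let ?A = "{p\<in>permutations_of_set {1..n}. lowering_gens n p \<inter> insert i T = {}}"
  let ?B = "{p\<in>permutations_of_set {1..n}.
    lowering_gens n p \<inter> T = {} \<and> i \<in> lowering_gens n p}"
  have perm: "distinct p" "length p = n" if "p \<in> permutations_of_set {1..n}" for p
    using that by (simp_all add: permutations_of_setD length_finite_permutations_of_set)
  have "?Z = ?A \<union> ?B" "?A \<inter> ?B = {}"
    by auto
  then have "sum ?f ?Z = sum ?f ?A + sum ?f ?B"
    by (simp add: sum.union_disjoint)
  also have "sum ?f ?B = sum (\<lambda>p. monom 1 1 * ?f p) ?A"
  proof (rule sum.reindex_bij_witness[of _ "c i" "c i"])
    fix p assume p: "p \<in> ?B"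
    then have "i \<in> lowering_gens n p" "c i p \<in> permutations_of_set {1..n}"
      by (simp_all add: c_in_permutations_of_set)
    then show "c i p \<in> ?A"
      using p insert.hyps(2) lowering_gens_c[OF perm[of p] i] by auto
    show "c i (c i p) = p"
      using p perm by (simp add: c_c)
    have "run p = Suc (run (c i p))"
      using run_c_eq_if_lowers[of p i] \<open>i \<in> lowering_gens n p\<close> p perm[of p] CidxD[OF i]
        run_pos[of p]
      by (simp add: lowering_gens_def)
    then show "monom 1 1 * ?f (c i p) = ?f p"
      by (simp add: mult_monom)
  next
    fix p assume p: "p \<in> ?A"
    then show "c i (c i p) = p"
      using perm by (simp add: c_c)
    show "c i p \<in> ?B"
      using p insert.hyps(2) lowering_gens_c[OF perm[of p] i]
      by (auto simp: c_in_permutations_of_set)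
  qed
  also have "sum ?f ?A + sum (\<lambda>p. monom 1 1 * ?f p) ?A = (1 + monom 1 1) * sum ?f ?A"
    by (simp add: ring_distribs flip: sum_distrib_left)
  also have "(1 + monom 1 1 :: int poly) = [:1, 1:]"
    by (simp add: monom_altdef one_pCons)
  finally have sum_Z: "sum ?f ?Z = [:1, 1:] * sum ?f ?A" .
  have "R n = [:1, 1:] ^ card T * sum ?f ?Z"
    by (rule insert.IH[OF \<open>T \<subseteq> Cidx n\<close>])
  also have "\<dots> = [:1, 1:] ^ card (insert i T) * sum ?f ?A"
    by (simp only: sum_Z card_insert_disjoint[OF insert.hyps] power_Suc2 mult.assoc)
  finally show ?case .
qed

lemma card_Cidx: "card (Cidx n) = (n - 2) div 2"
proof -
  let ?m = "(n - 2) div 2"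
  have "Cidx n = (\<lambda>j. 2 * j + 1) ` {1..?m}"
  proof (intro set_eqI iffI)
    fix i assume "i \<in> Cidx n"
    then have i: "odd i" "3 \<le> i" "i \<le> (if even n then n - 1 else n - 2)"
      unfolding Cidx_def by auto
    then obtain j where j: "i = 2 * j + 1"
      by (auto elim!: oddE)
    have "1 \<le> j" "j \<le> ?m"
      using i j by (auto split: if_splits elim!: evenE oddE)
    then show "i \<in> (\<lambda>j. 2 * j + 1) ` {1..?m}"
      using j by auto
  next
    fix i assume "i \<in> (\<lambda>j. 2 * j + 1) ` {1..?m}"
    then obtain j where "i = 2 * j + 1" "1 \<le> j" "j \<le> ?m"
      by auto
    then show "i \<in> Cidx n"
      unfolding Cidx_def mem_Collect_eq by presburger
  qed
  then show ?thesis
    by (simp add: card_image inj_on_def)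
qed

lemma distinct_orbit: "q \<in> orbit n p \<Longrightarrow> distinct p \<Longrightarrow> distinct q"
  by (induction rule: orbit.induct) (simp_all add: distinct_c)

lemma length_orbit: "q \<in> orbit n p \<Longrightarrow> length q = length p"
  by (induction rule: orbit.induct) simp_all

lemma run_card_lowering_gens_orbit_invariant:
  assumes "q \<in> orbit n p" "distinct p" "length p = n"
  shows "run q + card (lowering_gens n p) = run p + card (lowering_gens n q)"
  using assms
proof (induction rule: orbit.induct)
  case self
  then show ?case by simp
next
  case (step q i)
  have q: "distinct q" "length q = n"
    using distinct_orbit[OF step.hyps(1)] length_orbit[OF step.hyps(1)] step.prems by simp_all
  have i: "3 \<le> i" "i < length q"
    using CidxD[OF step.hyps(2)] q(2) by simp_all
  show ?case
  proof (cases "i \<in> lowering_gens n q")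
    case True
    then have "lowers i q"
      unfolding lowering_gens_def by simp
    moreover have "lowering_gens n (c i q) = lowering_gens n q - {i}"
      using lowering_gens_c[OF q step.hyps(2)] True by simp
    ultimately have "Suc (run (c i q)) = run q"
      "Suc (card (lowering_gens n (c i q))) = card (lowering_gens n q)"
      using run_c_eq_if_lowers[OF q(1) i] run_pos[of q] card_Suc_Diff1[OF finite_lowering_gens True]
      by simp_all
    then show ?thesis
      using step.IH step.prems by linarith
  next
    case False
    then have "\<not> lowers i q"
      using step.hyps(2) unfolding lowering_gens_def by simp
    moreover have "lowering_gens n (c i q) = insert i (lowering_gens n q)"
      using lowering_gens_c[OF q step.hyps(2)] False by simp
    ultimately have "run (c i q) = Suc (run q)"
      "card (lowering_gens n (c i q)) = Suc (card (lowering_gens n q))"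
      using run_c_eq_if_lowers[OF q(1) i] False by simp_all
    then show ?thesis
      using step.IH step.prems by linarith
  qed
qed

lemma minimal_in_orbit_iff_lowering_gens_empty:
  assumes "distinct p" "length p = n"
  shows "minimal_in_orbit n p \<longleftrightarrow> lowering_gens n p = {}"
proof
  assume min: "minimal_in_orbit n p"
  show "lowering_gens n p = {}"
  proof (rule ccontr)
    assume "lowering_gens n p \<noteq> {}"
    then obtain i where "i \<in> Cidx n" "run (c i p) < run p"
      unfolding lowering_gens_def lowers_def by auto
    moreover have "c i p \<in> orbit n p"
      using orbit.step[OF orbit.self] \<open>i \<in> Cidx n\<close> by blast
    ultimately show False
      using min unfolding minimal_in_orbit_def by (meson not_le)
  qed
next
  assume "lowering_gens n p = {}"
  show "minimal_in_orbit n p"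
    unfolding minimal_in_orbit_def
  proof
    fix q assume "q \<in> orbit n p"
    from run_card_lowering_gens_orbit_invariant[OF this assms] \<open>lowering_gens n p = {}\<close>
    show "run p \<le> run q" by simp
  qed
qed

theorem mainTheorem4:
  fixes n m :: nat
  assumes "n \<ge> 4" and "m = (n - 2) div 2"
  shows "R n = [:1, 1:] ^ m *
           (\<Sum>q\<in>{q\<in>permutations_of_set {1..n}. minimal_in_orbit n q}. monom 1 (run q))
         \<and> [:1, 1:] ^ m dvd R n"
proof -
  have "minimal_in_orbit n q \<longleftrightarrow> lowering_gens n q \<inter> Cidx n = {}"
    if "q \<in> permutations_of_set {1..n}" for q
    using minimal_in_orbit_iff_lowering_gens_empty[of q n] that lowering_gens_subset_Cidx[of n q]
    by (simp add: permutations_of_setD length_finite_permutations_of_set Int_absorb2)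
  then have "{q\<in>permutations_of_set {1..n}. lowering_gens n q \<inter> Cidx n = {}}
      = {q\<in>permutations_of_set {1..n}. minimal_in_orbit n q}"
    by blast
  with R_eq_sum_avoiding_lowering_gens[OF finite_Cidx order_refl, of n]
  have "R n = [:1, 1:] ^ m *
           (\<Sum>q\<in>{q\<in>permutations_of_set {1..n}. minimal_in_orbit n q}. monom 1 (run q))"
    unfolding card_Cidx assms(2) by simp
  then show ?thesis
    by (metis dvd_triv_left)
qed

end
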